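(* Let $X\subseteq\Omega$ be club in $\Omega$ with $0\notin X$, and $n<\omega$. If $\xi\in X$ and $\xi<\Theta_X(\Omega_n)$, then there is $\zeta<\Omega_n$ such that $\xi=\Theta_X(\zeta)$.
   Context: $\Omega$ is the first uncountable ordinal; $\varepsilon_{\Omega+1}$ the least $\varepsilon>\Omega$ with $\omega^\varepsilon=\varepsilon$. $\Omega_0=1$, $\Omega_{n+1}=\Omega^{\Omega_n}$. Every $0<\xi<\varepsilon_{\Omega+1}$ has a unique $\Omega$-normal form $\xi=\Omega^{\alpha}\beta+\gamma$ with $0<\beta<\Omega$, $\gamma<\Omega^{\alpha}$; $C(0)=\{0\}$, $C(\Omega^\alpha\beta+\gamma)=C(\alpha)\cup C(\gamma)\cup\{\beta\}$; $\xi^*=\max C(\xi)$. $\Theta_X(\xi)$ is defined by recursion on $\xi<\varepsilon_{\Omega+1}$ as the least $\theta\in X$ with $\theta>\xi^*$ such that every $\zeta<\xi$ with $\zeta^*<\theta$ satisfies $\Theta_X(\zeta)<\theta$. *)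

theory Defs
  imports Main "HOL-Library.Countable_Set"
begin

text \<open>Countable ordinals (elements of Omega) are modelled by a wellordered type 'a
whose order type is the first uncountable ordinal (assumed in the theorem:
'a uncountable and every proper initial segment countable).
Ordinals below epsilon_{Omega+1} are represented by Omega-normal forms:
Plus al be ga stands for Omega^al * be + ga.\<close>

datatype 'a onf = Zero | Plus "'a onf" 'a "'a onf"

definition o0 :: "'a::wellorder" where "o0 = (LEAST x. True)"
definition o1 :: "'a::wellorder" where "o1 = (LEAST x. o0 < x)"

fun onf_less :: "'a::wellorder onf \<Rightarrow> 'a onf \<Rightarrow> bool" where
  "onf_less Zero Zero = False"
| "onf_less Zero (Plus a b c) = True"
| "onf_less (Plus a b c) Zero = False"
| "onf_less (Plus a b c) (Plus a' b' c') =
     (onf_less a a' \<or> (a = a' \<and> (b < b' \<or> (b = b' \<and> onf_less c c'))))"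

text \<open>gamma < Omega^alpha, for gamma in normal form\<close>
fun below_pow :: "'a::wellorder onf \<Rightarrow> 'a onf \<Rightarrow> bool" where
  "below_pow Zero al = True"
| "below_pow (Plus a b c) al = onf_less a al"

fun onf_normal :: "'a::wellorder onf \<Rightarrow> bool" where
  "onf_normal Zero = True"
| "onf_normal (Plus a b c) =
     (onf_normal a \<and> o0 < b \<and> onf_normal c \<and> below_pow c a)"

fun onf_C :: "'a::wellorder onf \<Rightarrow> 'a set" where
  "onf_C Zero = {o0}"
| "onf_C (Plus a b c) = onf_C a \<union> onf_C c \<union> {b}"

definition onf_star :: "'a::wellorder onf \<Rightarrow> 'a" where
  "onf_star x = Max (onf_C x)"

definition onf_rel :: "('a::wellorder onf \<times> 'a onf) set" where
  "onf_rel = {(z, x). onf_normal z \<and> onf_normal x \<and> onf_less z x}"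

definition Theta :: "'a::wellorder set \<Rightarrow> 'a onf \<Rightarrow> 'a" where
  "Theta X = wfrec onf_rel (\<lambda>f x. LEAST t. t \<in> X \<and> onf_star x < t \<and>
      (\<forall>z. onf_normal z \<and> onf_less z x \<and> onf_star z < t \<longrightarrow> f z < t))"

text \<open>Omega_0 = 1, Omega_{n+1} = Omega^(Omega_n)\<close>
fun Omega_n :: "nat \<Rightarrow> 'a::wellorder onf" where
  "Omega_n 0 = Plus Zero o1 Zero"
| "Omega_n (Suc n) = Plus (Omega_n n) o1 Zero"

definition club :: "'a::wellorder set \<Rightarrow> bool" where
  "club X \<longleftrightarrow> (\<forall>a. \<exists>x\<in>X. a < x) \<and>
     (\<forall>a. a \<noteq> o0 \<and> (\<forall>b<a. \<exists>x\<in>X. b < x \<and> x < a) \<longrightarrow> a \<in> X)"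

end

theory Submission
  imports Defs
begin

text \<open>Let \<open>\<zeta>\<close> be \<open><\<close>-minimal among the normal forms below \<open>\<Omega>\<^sub>n\<close> with
  \<open>\<zeta>\<^sup>* < \<xi> \<le> \<Theta>\<^sub>X(\<zeta>)\<close>. Minimality makes \<open>\<xi>\<close> itself satisfy the condition defining
  \<open>\<Theta>\<^sub>X(\<zeta>)\<close>, hence \<open>\<Theta>\<^sub>X(\<zeta>) \<le> \<xi>\<close>. Such a \<open>\<zeta>\<close> exists because otherwise \<open>\<xi>\<close> would
  satisfy the condition defining \<open>\<Theta>\<^sub>X(\<Omega>\<^sub>n)\<close>, contradicting \<open>\<xi> < \<Theta>\<^sub>X(\<Omega>\<^sub>n)\<close>; this
  needs \<open>\<Omega>\<^sub>n\<^sup>* = 1 < \<xi>\<close>, and the remaining case \<open>\<xi> = 1\<close> is \<open>\<xi> = \<Theta>\<^sub>X(0)\<close>.\<close>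

lemma onf_less_trans: "onf_less x y \<Longrightarrow> onf_less y z \<Longrightarrow> onf_less x z"
proof (induction x arbitrary: y z)
  case Zero
  then show ?case by (cases y; cases z) auto
next
  case (Plus a b c)
  then show ?case by (cases y; cases z) (auto intro: less_trans)
qed

lemma not_onf_less_Zero: "\<not> onf_less x Zero"
  by (cases x) auto

lemma Zero_in_acc_onf_rel: "Zero \<in> Wellfounded.acc onf_rel"
  by (rule accI) (auto simp: onf_rel_def not_onf_less_Zero)

lemma not_normal_in_acc_onf_rel: "\<not> onf_normal x \<Longrightarrow> x \<in> Wellfounded.acc onf_rel"
  by (rule accI) (simp add: onf_rel_def)

lemma Plus_in_acc_onf_rel:
  assumes below_acc: "\<And>x. onf_normal x \<Longrightarrow> below_pow x a \<Longrightarrow> x \<in> Wellfounded.acc onf_rel"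
    and "onf_normal (Plus a b c)"
  shows "Plus a b c \<in> Wellfounded.acc onf_rel"
  using assms(2)
proof (induction b arbitrary: c rule: less_induct)
  case (less b)
  then have "c \<in> Wellfounded.acc onf_rel" by (simp add: below_acc)
  then show ?case using less.prems
  proof (induction c rule: acc_induct_rule)
    case (1 c)
    show ?case
    proof (rule accI)
      fix y assume y: "(y, Plus a b c) \<in> onf_rel"
      then have "onf_normal y" by (simp add: onf_rel_def)
      show "y \<in> Wellfounded.acc onf_rel"
      proof (cases y)
        case Zero
        then show ?thesis by (simp add: Zero_in_acc_onf_rel)
      next
        case (Plus a' b' c')
        with y consider "onf_less a' a" | "a' = a" "b' < b" | "a' = a" "b' = b" "onf_less c' c"
          by (auto simp: onf_rel_def)
        then show ?thesis
        proof cases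
          case 1
          then show ?thesis using below_acc \<open>onf_normal y\<close> Plus by simp
        next
          case 2
          then show ?thesis using less.IH \<open>onf_normal y\<close> Plus by simp
        next
          case 3
          then show ?thesis using "1.IH"[of c'] "1.prems" \<open>onf_normal y\<close> Plus
            by (simp add: onf_rel_def)
        qed
      qed
    qed
  qed
qed

lemma below_pow_in_acc_onf_rel:
  assumes "a \<in> Wellfounded.acc onf_rel" "onf_normal a" "onf_normal x" "below_pow x a"
  shows "x \<in> Wellfounded.acc onf_rel"
  using assms
proof (induction a arbitrary: x rule: acc_induct_rule)
  case (1 a)
  show ?case
  proof (cases x)
    case Zero
    then show ?thesis by (simp add: Zero_in_acc_onf_rel)
  next
    case (Plus a' b c)
    with "1.prems" have "(a', a) \<in> onf_rel" "onf_normal a'"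
      by (simp_all add: onf_rel_def)
    then show ?thesis
      using Plus_in_acc_onf_rel[of a' b c] "1.IH" "1.prems"(2) Plus by blast
  qed
qed

lemma wf_onf_rel: "wf onf_rel"
proof (rule acc_wfI, rule allI)
  fix x :: "'a onf"
  show "x \<in> Wellfounded.acc onf_rel"
  proof (induction x)
    case Zero
    show ?case by (rule Zero_in_acc_onf_rel)
  next
    case (Plus a b c)
    show ?case
      using Plus_in_acc_onf_rel below_pow_in_acc_onf_rel[OF Plus.IH(1)]
        not_normal_in_acc_onf_rel
      by (metis onf_normal.simps(2))
  qed
qed

definition Theta_candidate :: "'a::wellorder set \<Rightarrow> 'a onf \<Rightarrow> 'a \<Rightarrow> bool" where
  "Theta_candidate X x t \<longleftrightarrow> t \<in> X \<and> onf_star x < t \<and>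
     (\<forall>z. onf_normal z \<and> onf_less z x \<and> onf_star z < t \<longrightarrow> Theta X z < t)"

lemma Theta_unfold:
  assumes "onf_normal x"
  shows "Theta X x = (LEAST t. Theta_candidate X x t)"
proof -
  have "Theta X x = (LEAST t. t \<in> X \<and> onf_star x < t \<and>
      (\<forall>z. onf_normal z \<and> onf_less z x \<and> onf_star z < t \<longrightarrow> cut (Theta X) onf_rel x z < t))"
    unfolding Theta_def by (subst wfrec[OF wf_onf_rel]) simp
  also have "\<dots> = (LEAST t. Theta_candidate X x t)"
    using assms unfolding Theta_candidate_def
    by (intro arg_cong[where f = Least] ext) (auto simp: cut_apply onf_rel_def)
  finally show ?thesis .
qed

lemma Theta_le:
  "onf_normal x \<Longrightarrow> Theta_candidate X x t \<Longrightarrow> Theta X x \<le> t"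
  unfolding Theta_unfold by (rule Least_le)

lemma Theta_candidate_Theta:
  "onf_normal x \<Longrightarrow> Theta_candidate X x t \<Longrightarrow> Theta_candidate X x (Theta X x)"
  unfolding Theta_unfold by (rule LeastI)

lemma Theta_attains_below:
  assumes x: "onf_normal x" and "\<xi> \<in> X" "onf_star x < \<xi>" "\<xi> < Theta X x"
  shows "\<exists>\<zeta>. onf_normal \<zeta> \<and> onf_less \<zeta> x \<and> \<xi> = Theta X \<zeta>"
proof -
  define S where
    "S = {z. onf_normal z \<and> onf_less z x \<and> onf_star z < \<xi> \<and> \<xi> \<le> Theta X z}"
  have "\<not> Theta_candidate X x \<xi>"
    using Theta_le[OF x, of X \<xi>] \<open>\<xi> < Theta X x\<close> by (metis not_le)
  then obtain z0 where "z0 \<in> S"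
    using assms unfolding Theta_candidate_def S_def by (auto simp: not_less)
  then obtain z where "z \<in> S" and z_min: "\<And>y. (y, z) \<in> onf_rel \<Longrightarrow> y \<notin> S"
    using wfE_min[OF wf_onf_rel] by metis
  then have z: "onf_normal z" "onf_less z x" "onf_star z < \<xi>" "\<xi> \<le> Theta X z"
    by (simp_all add: S_def)
  have "Theta_candidate X z \<xi>"
    unfolding Theta_candidate_def
  proof (intro conjI allI impI)
    fix y assume y: "onf_normal y \<and> onf_less y z \<and> onf_star y < \<xi>"
    then have "y \<notin> S" using z_min z(1) by (simp add: onf_rel_def)
    then show "Theta X y < \<xi>"
      using y onf_less_trans[OF _ z(2)] by (auto simp: S_def not_le)
  qed (use \<open>\<xi> \<in> X\<close> z(3) in auto)
  then have "Theta X z \<le> \<xi>" by (rule Theta_le[OF z(1)])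
  then show ?thesis using z by (intro exI[of _ z]) simp
qed

lemma o0_le: "o0 \<le> (x::'a::wellorder)"
  unfolding o0_def by (rule Least_le) simp

lemma o1_le: "o0 < (x::'a::wellorder) \<Longrightarrow> o1 \<le> x"
  unfolding o1_def by (rule Least_le)

lemma o0_less_o1: "o0 < (x::'a::wellorder) \<Longrightarrow> o0 < (o1::'a)"
  unfolding o1_def by (rule LeastI)

lemma onf_star_Omega_n: "onf_star (Omega_n n :: 'a::wellorder onf) = o1"
proof -
  have "onf_C (Omega_n n :: 'a onf) = {o0, o1}" by (induction n) auto
  then show ?thesis by (simp add: onf_star_def o0_le max_def)
qed

lemma onf_normal_Omega_n: "o0 < (o1::'a::wellorder) \<Longrightarrow> onf_normal (Omega_n n :: 'a onf)"
  by (induction n) auto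

lemma onf_less_Zero_Omega_n: "onf_less Zero (Omega_n n)"
  by (cases n) simp_all

lemma Theta_Zero_eq_o1:
  fixes X :: "'a::wellorder set"
  assumes "o1 \<in> X" "o0 < (o1::'a)"
  shows "Theta X Zero = o1"
proof -
  have "Theta_candidate X Zero o1"
    using assms by (simp add: Theta_candidate_def onf_star_def not_onf_less_Zero)
  then have "Theta X Zero \<le> o1" "o0 < Theta X Zero"
    using Theta_le[of Zero X o1] Theta_candidate_Theta[of Zero X o1]
    by (simp_all add: Theta_candidate_def onf_star_def)
  then show ?thesis using o1_le by (blast intro: order_antisym)
qed

text \<open>Of the hypotheses only \<open>\<xi> \<in> X\<close>, \<open>o0 \<notin> X\<close> and \<open>\<xi> < \<Theta>\<^sub>X(\<Omega>\<^sub>n)\<close> are used: the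
  others make \<open>\<Theta>\<^sub>X\<close> a total function, whereas each least element taken here is
  taken over a set that \<open>\<xi>\<close> shows to be nonempty.\<close>

theorem lemma3p3:
  fixes X :: "'a::wellorder set" and n :: nat and \<xi> :: 'a
  assumes "uncountable (UNIV :: 'a set)"
    and "\<And>x::'a. countable {y. y < x}"
    and "club X" and "o0 \<notin> X"
    and "\<xi> \<in> X" and "\<xi> < Theta X (Omega_n n)"
  shows "\<exists>\<zeta>. onf_normal \<zeta> \<and> onf_less \<zeta> (Omega_n n) \<and> \<xi> = Theta X \<zeta>"
proof -
  have "o0 < \<xi>" using assms(4,5) o0_le[of \<xi>] by (metis order.not_eq_order_implies_strict)
  then have "o0 < (o1::'a)" "o1 \<le> \<xi>" by (simp_all add: o0_less_o1 o1_le)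
  then consider "\<xi> = o1" | "o1 < \<xi>" by fastforce
  then show ?thesis
  proof cases
    case 1
    then have "\<xi> = Theta X Zero" using Theta_Zero_eq_o1 assms(5) \<open>o0 < o1\<close> by metis
    then show ?thesis using onf_less_Zero_Omega_n onf_normal.simps(1) by blast
  next
    case 2
    then show ?thesis
      using Theta_attains_below[OF onf_normal_Omega_n[OF \<open>o0 < o1\<close>] assms(5)] assms(6)
      by (simp add: onf_star_Omega_n)
  qed
qed

end
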